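(* Consider a cathode solution $(\phi_{\mathrm{el}},\phi_{\mathrm{ion}},C)$ with active-layer boundary $h_b\in(h_1,h_2)$ in the classical formulation, i.e. with $\eta=s=\phi_{\mathrm{ion}}-\phi_{\mathrm{el}}-\frac{RT}{4F}\ln\frac{C^{\mathrm{bulk}}}{C}$, and assume $j_{\mathrm{cell}}>0$. Then there exists $\varepsilon>0$ such that $\eta(y)<0$ for all $y\in(h_b-\varepsilon,h_b)$. Consequently the charge-transfer current $i(y)$ is negative on $(h_b-\varepsilon,h_b)$.
   Context: Cathode model (isothermal, 1D). Fix real numbers $0<h_1<h_b<h_2$ and positive constants $\sigma_{\mathrm{el}},\sigma_{\mathrm{ion}}$ (effective electronic/ionic conductivities), $\rho_a$ (air density), $D_2$ (effective diffusion coefficient), $M$ (molar mass of $O_2$), $F$ (Faraday constant), $R$ (gas constant), $T$ (temperature), $A$ (reaction surface area per volume). Also fix $j_{\mathrm{cell}}>0$, $V_2\in\mathbb R$ and $C^{\mathrm{bulk}}\in(0,1)$. Charge-transfer current. For $y\in(h_1,h_b)$ set $$i(y)=A\,K\,\Big(\frac{\rho_a R T\,C(y)}{M}\Big)^{0.2}\Big[\exp\Big(\frac{1.2F\eta(y)}{RT}\Big)-\exp\Big(-\frac{F\eta(y)}{RT}\Big)\Big],\qquad K=1.47\cdot10^{6}\,e^{-85859/(RT)}.$$ Define the signed quantity $$s(y)=\phi_{\mathrm{ion}}(y)-\phi_{\mathrm{el}}(y)-\frac{RT}{4F}\ln\frac{C^{\mathrm{bulk}}}{C(y)}.$$ The activation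 overpotential is $\eta=s$ in the classical formulation and $\eta=|s|$ in the modified formulation. A cathode solution with active-layer boundary $h_b$ is a triple $\phi_{\mathrm{el}},\phi_{\mathrm{ion}},C\in C^1([h_1,h_2])$ with the following properties. - Regularity: each function is $C^2$ on $[h_1,h_b]$ and on $[h_b,h_2]$, and $C>0$. - Equations on $(h_1,h_b)$: $(\sigma_{\mathrm{el}}\phi_{\mathrm{el}}')'=-i$, $(\sigma_{\mathrm{ion}}\phi_{\mathrm{ion}}')'=i$ and $(\rho_aD_2C')'=\frac{M}{4F}i$. - Equations on $(h_b,h_2)$: all three left-hand sides vanish. - Boundary conditions: $-\sigma_{\mathrm{el}}\phi_{\mathrm{el}}'(h_2)=j_{\mathrm{cell}}$, $\phi_{\mathrm{ion}}'(h_2)=0$, $\phi_{\mathrm{el}}(h_2)=V_2$, $C(h_2)=C^{\mathrm{bulk}}$, $\phi_{\mathrm{el}}'(h_1)=0$, $-\sigma_{\mathrm{ion}}\phi_{\mathrm{ion}}'(h_1)=j_{\mathrm{cell}}$, $C'(h_1)=0$. - Interface condition: $s(h_b)=0$, i.e. $\eta(h_b)=0$. *)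

theory Defs
  imports "HOL-Analysis.Analysis"
begin

definition C1_with :: "real set \<Rightarrow> (real \<Rightarrow> real) \<Rightarrow> (real \<Rightarrow> real) \<Rightarrow> bool" where
  "C1_with S f f' \<longleftrightarrow>
     (\<forall>y\<in>S. (f has_real_derivative f' y) (at y within S)) \<and> continuous_on S f'"

definition K_rate :: "real \<Rightarrow> real \<Rightarrow> real" where
  "K_rate R T = 1.47 * 10^6 * exp (- 85859 / (R * T))"

definition ct_current ::
  "real \<Rightarrow> real \<Rightarrow> real \<Rightarrow> real \<Rightarrow> real \<Rightarrow> real \<Rightarrow> real \<Rightarrow> real \<Rightarrow> real" where
  "ct_current A R T F rho_a M c eta =
     A * K_rate R T * ((rho_a * R * T * c / M) powr 0.2) *
     (exp (1.2 * F * eta / (R * T)) - exp (- F * eta / (R * T)))"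

definition s_signed :: "real \<Rightarrow> real \<Rightarrow> real \<Rightarrow> real \<Rightarrow> real \<Rightarrow> real \<Rightarrow> real \<Rightarrow> real" where
  "s_signed R T F Cbulk phi_ion phi_el c = phi_ion - phi_el - R * T / (4 * F) * ln (Cbulk / c)"

end

theory Submission
  imports Defs
begin

text \<open>
  In the passive layer all second derivatives vanish, so the fluxes at \<open>hb\<close> are those at \<open>h2\<close>:
  \<open>\<phi>\<^sub>i\<^sub>o\<^sub>n'(hb) = 0\<close> and \<open>\<sigma>\<^sub>e\<^sub>l \<phi>\<^sub>e\<^sub>l'(hb) = -j\<^sub>c\<^sub>e\<^sub>l\<^sub>l\<close>. In the active layer the reaction terms
  cancel in \<open>\<sigma>\<^sub>e\<^sub>l \<phi>\<^sub>e\<^sub>l' + (4F/M) \<rho>\<^sub>a D\<^sub>2 C'\<close>, which therefore keeps its value \<open>0\<close> from \<open>h1\<close>;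
  hence \<open>C'(hb) > 0\<close>. Consequently \<open>s'(hb) = j\<^sub>c\<^sub>e\<^sub>l\<^sub>l/\<sigma>\<^sub>e\<^sub>l + RT/(4F) C'(hb)/C(hb) > 0\<close>, and as
  \<open>s(hb) = 0\<close>, \<open>s\<close> is negative just left of \<open>hb\<close>. The current has the sign of \<open>\<eta>\<close>.
\<close>

lemma C1_with_DERIV_interior:
  assumes "C1_with {a..b} f f'" "a < x" "x < b"
  shows "(f has_real_derivative f' x) (at x)"
proof -
  have "(f has_real_derivative f' x) (at x within {a..b})"
    using assms unfolding C1_with_def by auto
  then show ?thesis
    using at_within_Icc_at[OF assms(2,3)] by simp
qed

lemma C1_with_lincomb:
  assumes "C1_with S f f'" "C1_with S g g'"
  shows "C1_with S (\<lambda>x. c * f x + d * g x) (\<lambda>x. c * f' x + d * g' x)"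
  using assms unfolding C1_with_def
  by (auto intro!: derivative_eq_intros continuous_intros)

lemma C1_with_eq_endpoints_if_deriv_zero:
  assumes "a < b" "C1_with {a..b} g g'" "\<And>x. a < x \<Longrightarrow> x < b \<Longrightarrow> g' x = 0"
  shows "g b = g a"
proof (rule DERIV_isconst_end[OF \<open>a < b\<close>])
  show "continuous_on {a..b} g"
    using assms(2) unfolding C1_with_def by (blast intro: DERIV_continuous_on)
  show "DERIV g x :> 0" if "a < x" "x < b" for x
    using C1_with_DERIV_interior[OF assms(2) that] assms(3)[OF that] by simp
qed

lemma s_signed_has_real_derivative:
  assumes "(phi_ion has_real_derivative phi_ion' x) (at x)"
    and "(phi_el has_real_derivative phi_el' x) (at x)"
    and "(c has_real_derivative c' x) (at x)"
    and "c x > 0" "Cbulk > 0" "F \<noteq> 0"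
  shows "((\<lambda>y. s_signed R T F Cbulk (phi_ion y) (phi_el y) (c y)) has_real_derivative
           phi_ion' x - phi_el' x + R * T / (4 * F) * (c' x / c x)) (at x)"
proof -
  have deriv: "((\<lambda>y. s_signed R T F Cbulk (phi_ion y) (phi_el y) (c y)) has_real_derivative
         phi_ion' x - phi_el' x - R * T / (4 * F) * (1 / (Cbulk / c x) * (- Cbulk * c' x / (c x)\<^sup>2)))
         (at x)"
    unfolding s_signed_def using assms
    by (auto intro!: derivative_eq_intros simp: power2_eq_square)
  moreover have "1 / (Cbulk / c x) * (- Cbulk * c' x / (c x)\<^sup>2) = - (c' x / c x)"
    using assms(4,5) by (simp add: field_simps power2_eq_square)
  ultimately show ?thesis by (simp only: mult_minus_right diff_minus_eq_add)
qed

lemma ct_current_neg_iff: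
  assumes "A > 0" "R > 0" "T > 0" "F > 0" "rho_a > 0" "M > 0" "c > 0"
  shows "ct_current A R T F rho_a M c eta < 0 \<longleftrightarrow> eta < 0"
proof -
  have prefactor_pos: "A * K_rate R T * (rho_a * R * T * c / M) powr 0.2 > 0"
    unfolding K_rate_def using assms by simp
  define q where "q = F * eta / (R * T)"
  have "ct_current A R T F rho_a M c eta < 0
          \<longleftrightarrow> exp (1.2 * F * eta / (R * T)) - exp (- F * eta / (R * T)) < 0"
    unfolding ct_current_def using mult_less_cancel_left_pos[OF prefactor_pos, of _ 0] by simp
  also have "\<dots> \<longleftrightarrow> 1.2 * q < - q"
    unfolding q_def by (simp add: mult.assoc)
  also have "\<dots> \<longleftrightarrow> q < 0"
    by linarith
  also have "\<dots> \<longleftrightarrow> eta < 0"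
    unfolding q_def using assms by (simp add: divide_less_0_iff mult_less_0_iff)
  finally show ?thesis .
qed

lemma neg_at_left_if_zero_with_pos_deriv:
  fixes f :: "real \<Rightarrow> real"
  assumes "DERIV f x :> d" "d > 0" "f x = 0"
  shows "eventually (\<lambda>y. f y < 0) (at_left x)"
proof -
  obtain e where "e > 0" "\<forall>h>0. h < e \<longrightarrow> f (x - h) < f x"
    using DERIV_pos_inc_left[OF assms(1,2)] by blast
  then have "f y < 0" if "y \<in> {x - e<..<x}" for y
    using that assms(3) by (auto dest: spec[of _ "x - y"])
  then show ?thesis
    using \<open>e > 0\<close> by (intro eventually_at_leftI[of "x - e"]) auto
qed

lemma interface_fluxes:
  assumes "h1 < hb" "hb < h2" "sigma_el > 0" "kappa > 0"
    and "C1_with {h1..hb} phi_el' phi_el''a" "C1_with {h1..hb} C' C''a"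
    and "C1_with {hb..h2} phi_el' phi_el''b"
    and "\<And>x. h1 < x \<Longrightarrow> x < hb \<Longrightarrow> sigma_el * phi_el''a x + kappa * C''a x = 0"
    and "\<And>x. hb < x \<Longrightarrow> x < h2 \<Longrightarrow> phi_el''b x = 0"
    and "- sigma_el * phi_el' h2 = j_cell" "phi_el' h1 = 0" "C' h1 = 0"
  shows "sigma_el * phi_el' hb = - j_cell" "kappa * C' hb = j_cell"
proof -
  show el_flux: "sigma_el * phi_el' hb = - j_cell"
    using C1_with_eq_endpoints_if_deriv_zero[OF assms(2,7,9)] assms(10) by simp
  have "sigma_el * phi_el' hb + kappa * C' hb = sigma_el * phi_el' h1 + kappa * C' h1"
    using assms(8)
    by (intro C1_with_eq_endpoints_if_deriv_zero[OF assms(1) C1_with_lincomb[OF assms(5,6)]])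
  then show "kappa * C' hb = j_cell"
    using el_flux assms(11,12) by simp
qed

theorem mainTheorem2:
  fixes h1 hb h2 sigma_el sigma_ion rho_a D2 M F R T A j_cell V2 C_bulk :: real
    and phi_el phi_ion C :: "real \<Rightarrow> real"
    and phi_el' phi_ion' C' :: "real \<Rightarrow> real"
    and phi_el''a phi_ion''a C''a phi_el''b phi_ion''b C''b :: "real \<Rightarrow> real"
  assumes h: "h1 < hb" "hb < h2"
    and pos: "sigma_el > 0" "sigma_ion > 0" "rho_a > 0" "D2 > 0" "M > 0" "F > 0"
                "R > 0" "T > 0" "A > 0"
    and jpos: "j_cell > 0"
    and Cb: "0 < C_bulk" "C_bulk < 1"
    and C1: "C1_with {h1..h2} phi_el phi_el'" "C1_with {h1..h2} phi_ion phi_ion'"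
            "C1_with {h1..h2} C C'"
    and C2a: "C1_with {h1..hb} phi_el' phi_el''a" "C1_with {h1..hb} phi_ion' phi_ion''a"
             "C1_with {h1..hb} C' C''a"
    and C2b: "C1_with {hb..h2} phi_el' phi_el''b" "C1_with {hb..h2} phi_ion' phi_ion''b"
             "C1_with {hb..h2} C' C''b"
    and Cpos: "\<forall>y\<in>{h1..h2}. C y > 0"
    and eq_a: "\<forall>y\<in>{h1<..<hb}.
       sigma_el * phi_el''a y =
         - ct_current A R T F rho_a M (C y) (s_signed R T F C_bulk (phi_ion y) (phi_el y) (C y))
       \<and> sigma_ion * phi_ion''a y =
         ct_current A R T F rho_a M (C y) (s_signed R T F C_bulk (phi_ion y) (phi_el y) (C y))
       \<and> rho_a * D2 * C''a y =
         M / (4 * F) * ct_current A R T F rho_a M (C y) (s_signed R T F C_bulk (phi_ion y) (phi_el y) (C y))"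
    and eq_b: "\<forall>y\<in>{hb<..<h2}.
       sigma_el * phi_el''b y = 0 \<and> sigma_ion * phi_ion''b y = 0 \<and> rho_a * D2 * C''b y = 0"
    and bc: "- sigma_el * phi_el' h2 = j_cell" "phi_ion' h2 = 0" "phi_el h2 = V2"
            "C h2 = C_bulk" "phi_el' h1 = 0" "- sigma_ion * phi_ion' h1 = j_cell" "C' h1 = 0"
    and interface: "s_signed R T F C_bulk (phi_ion hb) (phi_el hb) (C hb) = 0"
  shows "\<exists>\<epsilon>>0. \<forall>y\<in>{hb - \<epsilon><..<hb}.
           s_signed R T F C_bulk (phi_ion y) (phi_el y) (C y) < 0
         \<and> ct_current A R T F rho_a M (C y) (s_signed R T F C_bulk (phi_ion y) (phi_el y) (C y)) < 0"
proof -
  define s where "s y = s_signed R T F C_bulk (phi_ion y) (phi_el y) (C y)" for y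
  have ion_flux: "phi_ion' hb = 0"
    using C1_with_eq_endpoints_if_deriv_zero[OF h(2) C2b(2)] eq_b pos bc(2) by auto
  have active_layer: "sigma_el * phi_el''a x + 4 * F / M * (rho_a * D2) * C''a x = 0"
    if "h1 < x" "x < hb" for x
    using eq_a that pos by (auto simp: field_simps)
  have passive_layer: "phi_el''b x = 0" if "hb < x" "x < h2" for x
    using eq_b that pos by auto
  have fluxes: "sigma_el * phi_el' hb = - j_cell" "4 * F / M * (rho_a * D2) * C' hb = j_cell"
    using interface_fluxes[OF h pos(1) _ C2a(1,3) C2b(1) active_layer passive_layer bc(1,5,7)] pos
    by auto
  have el_flux: "phi_el' hb < 0"
    using fluxes(1) pos(1) jpos by (smt (verit) mult_nonneg_nonneg)
  have C'_pos: "C' hb > 0"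
    using fluxes(2) pos jpos by (metis zero_less_mult_pos divide_pos_pos mult_pos_pos zero_less_numeral)
  have C_pos: "C hb > 0"
    using Cpos h by simp
  have "DERIV s hb :> phi_ion' hb - phi_el' hb + R * T / (4 * F) * (C' hb / C hb)"
    unfolding s_def using h C_pos Cb pos
    by (intro s_signed_has_real_derivative C1_with_DERIV_interior[OF C1(2)]
        C1_with_DERIV_interior[OF C1(1)] C1_with_DERIV_interior[OF C1(3)]) auto
  moreover have "phi_ion' hb - phi_el' hb + R * T / (4 * F) * (C' hb / C hb) > 0"
    using ion_flux el_flux pos C'_pos C_pos
    by (smt (verit) divide_pos_pos mult_pos_pos)
  ultimately have "eventually (\<lambda>y. s y < 0) (at_left hb)"
    using interface unfolding s_def by (intro neg_at_left_if_zero_with_pos_deriv) auto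
  moreover have "eventually (\<lambda>y. y \<in> {h1<..<hb}) (at_left hb)"
    using eventually_at_left_real[OF h(1)] .
  ultimately have "eventually (\<lambda>y. s y < 0 \<and> C y > 0) (at_left hb)"
    by eventually_elim (use Cpos h in auto)
  then obtain b where "b < hb" "\<forall>y>b. y < hb \<longrightarrow> s y < 0 \<and> C y > 0"
    by (auto simp: eventually_at_left_field)
  then show ?thesis
    using ct_current_neg_iff[OF pos(9,7,8,6,3,5)] unfolding s_def
    by (intro exI[of _ "hb - b"]) auto
qed

end
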